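(* Let $(\mathcal U,\mathcal F)$ be a strongly accessible set system, $S$ a nonempty maximal solution with canonical order $s_1,\dots,s_{|S|}$, and $1\le j\le |S|$. Then $T=\mathrm{complete}(S[j])$ is a maximal solution and $T\preceq S$.
   Context: A set system is a pair $(\mathcal U,\mathcal F)$ with $\mathcal U$ finite, $\mathcal F\subseteq 2^{\mathcal U}$, $\emptyset\in\mathcal F$; $S\in\mathcal F$ is maximal if there is no $Y\in\mathcal F$ with $S\subsetneq Y$. Strongly accessible: for all $X,Y\in\mathcal F$ with $X\subsetneq Y$ there is $z\in Y\setminus X$ with $X\cup\{z\}\in\mathcal F$. Elements of $\mathcal U$ are identified with distinct integers. For $X,A\subseteq\mathcal U$, $X^+_A=\{a\in A\setminus X: X\cup\{a\}\in\mathcal F\}$. $Z=\{x\in\mathcal U:\{x\}\in\mathcal F\}$, $\mathrm{source}(X)=\min(X\cap Z)$. For $X\in\mathcal F$ and $A\subseteq\mathcal U$, $\mathrm{complete}(X,A)$ is obtained by repeatedly replacing $X$ with $X\cup\{\min X^+_A\}$ while $X^+_A\neq\emptyset$, and then returning $X$; $\mathrm{complete}(X)=\mathrm{complete}(X,\mathcal U)$. The canonical order of a nonempty maximal solution $S$ is $s_1=\mathrm{source}(S)$ and $s_{i+1}=\min S[i]^+_S$ while this set is nonempty, where $S[i]=\{s_1,\dots,s_i\}$ (equivalently, the order in which $\mathrm{complete}(\{\mathrm{source}(S)\},S)$ adds elements). For maximal solutions $S\ne T$ with canonical orders $(s_i)$, $(t_i)$, let $i$ be the smallest index with $s_i\neq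 t_i$; then $S\prec T$ iff $s_i<t_i$, and $S\preceq T$ iff $S\prec T$ or $S=T$. *)

theory Defs
  imports Main "HOL-Library.While_Combinator"
begin

definition set_system :: "int set \<Rightarrow> int set set \<Rightarrow> bool" where
  "set_system U F \<longleftrightarrow> finite U \<and> F \<subseteq> Pow U \<and> {} \<in> F"

definition strongly_accessible :: "int set set \<Rightarrow> bool" where
  "strongly_accessible F \<longleftrightarrow>
     (\<forall>X\<in>F. \<forall>Y\<in>F. X \<subset> Y \<longrightarrow> (\<exists>z\<in>Y - X. insert z X \<in> F))"

definition maximal_sol :: "int set set \<Rightarrow> int set \<Rightarrow> bool" where
  "maximal_sol F S \<longleftrightarrow> S \<in> F \<and> \<not> (\<exists>Y\<in>F. S \<subset> Y)"

definition ext :: "int set set \<Rightarrow> int set \<Rightarrow> int set \<Rightarrow> int set" where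
  "ext F X A = {a \<in> A - X. insert a X \<in> F}"

definition singletons :: "int set \<Rightarrow> int set set \<Rightarrow> int set" where
  "singletons U F = {x \<in> U. {x} \<in> F}"

definition source :: "int set \<Rightarrow> int set set \<Rightarrow> int set \<Rightarrow> int" where
  "source U F X = Min (X \<inter> singletons U F)"

definition complete_in :: "int set set \<Rightarrow> int set \<Rightarrow> int set \<Rightarrow> int set" where
  "complete_in F A X =
     while (\<lambda>Y. ext F Y A \<noteq> {}) (\<lambda>Y. insert (Min (ext F Y A)) Y) X"

definition complete :: "int set \<Rightarrow> int set set \<Rightarrow> int set \<Rightarrow> int set" where
  "complete U F X = complete_in F U X"

definition canonical_order :: "int set \<Rightarrow> int set set \<Rightarrow> int set \<Rightarrow> int list" where
  "canonical_order U F S =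
     while (\<lambda>L. ext F (set L) S \<noteq> {}) (\<lambda>L. L @ [Min (ext F (set L) S)]) [source U F S]"

definition sol_less :: "int set \<Rightarrow> int set set \<Rightarrow> int set \<Rightarrow> int set \<Rightarrow> bool" where
  "sol_less U F S T \<longleftrightarrow> S \<noteq> T \<and>
     (let s = canonical_order U F S; t = canonical_order U F T in
      \<exists>i < length s. i < length t \<and> take i s = take i t \<and> s ! i < t ! i)"

definition sol_le :: "int set \<Rightarrow> int set set \<Rightarrow> int set \<Rightarrow> int set \<Rightarrow> bool" where
  "sol_le U F S T \<longleftrightarrow> sol_less U F S T \<or> S = T"

end

theory Submission
  imports Defs "HOL-Library.Sublist"
begin

text \<open>The canonical order of a solution is its greedy sequence: each element is the least one
  that extends its predecessors inside the solution. The completion \<open>T\<close> of \<open>S[j]\<close> is maximal by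
  strong accessibility. If the canonical orders of \<open>T\<close> and \<open>S\<close> first differ after a common prefix
  \<open>P\<close>, where \<open>S\<close> continues with \<open>c\<close>, follow the completion from \<open>S[j]\<close>: it copies the greedy choices
  of \<open>S\<close> until it picks an element below the one \<open>S\<close> picks. Doing so before reaching \<open>P\<close> would
  make the greedy order of \<open>T\<close> deviate earlier, so \<open>T\<close> contains an element extending \<open>P\<close> that is
  at most \<open>c\<close>, and the next element of \<open>T\<close> after \<open>P\<close> is smaller than \<open>c\<close>.\<close>

lemma complete_in_rule:
  assumes "finite A" and "P X"
    and step: "\<And>Y. P Y \<Longrightarrow> ext F Y A \<noteq> {} \<Longrightarrow> P (insert (Min (ext F Y A)) Y)"
  shows "P (complete_in F A X) \<and> ext F (complete_in F A X) A = {}"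
  unfolding complete_in_def
proof (rule while_rule[where P = P and r = "measure (\<lambda>Y. card (A - Y))"])
  fix Y assume "P Y" and ne: "ext F Y A \<noteq> {}"
  show "P (insert (Min (ext F Y A)) Y)" using step \<open>P Y\<close> ne .
  have "finite (ext F Y A)" using \<open>finite A\<close> unfolding ext_def by simp
  then have "Min (ext F Y A) \<in> A - Y" using Min_in[OF _ ne] unfolding ext_def by blast
  then show "(insert (Min (ext F Y A)) Y, Y) \<in> measure (\<lambda>Y. card (A - Y))"
    unfolding in_measure using \<open>finite A\<close> by (intro psubset_card_mono) auto
qed (use \<open>P X\<close> in auto)

lemma complete_in_superset: "finite A \<Longrightarrow> X \<subseteq> complete_in F A X"
  using complete_in_rule[where P = "\<lambda>Y. X \<subseteq> Y"] by blast

lemma maximal_sol_complete: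
  assumes "set_system U F" and "strongly_accessible F" and "X \<in> F"
  shows "maximal_sol F (complete U F X)"
proof -
  have U: "finite U" "F \<subseteq> Pow U" using assms(1) unfolding set_system_def by auto
  have "complete U F X \<in> F \<and> ext F (complete U F X) U = {}"
    unfolding complete_def
  proof (rule complete_in_rule[OF U(1), where P = "\<lambda>Y. Y \<in> F"])
    fix Y assume "Y \<in> F" and ne: "ext F Y U \<noteq> {}"
    have "Min (ext F Y U) \<in> ext F Y U" using U(1) ne by (intro Min_in) (simp_all add: ext_def)
    then show "insert (Min (ext F Y U)) Y \<in> F" unfolding ext_def by simp
  qed (rule \<open>X \<in> F\<close>)
  then have T: "complete U F X \<in> F" and no_ext: "ext F (complete U F X) U = {}" by auto
  show ?thesis
    unfolding maximal_sol_def
  proof (intro conjI T notI)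
    assume "\<exists>Y\<in>F. complete U F X \<subset> Y"
    then obtain Y where Y: "Y \<in> F" "complete U F X \<subset> Y" by blast
    then obtain z where z: "z \<in> Y - complete U F X" "insert z (complete U F X) \<in> F"
      using assms(2) T unfolding strongly_accessible_def by blast
    moreover have "z \<in> U" using Y(1) z(1) U(2) by blast
    ultimately have "z \<in> ext F (complete U F X) U" unfolding ext_def by blast
    then show False using no_ext by simp
  qed
qed

definition greedy_sequence :: "int set set \<Rightarrow> int set \<Rightarrow> int list \<Rightarrow> bool" where
  "greedy_sequence F M L \<longleftrightarrow>
     (\<forall>as b. prefix (as @ [b]) L \<longrightarrow> b \<in> ext F (set as) M \<and> (\<forall>x\<in>ext F (set as) M. b \<le> x))"

lemma greedy_sequenceD:
  "greedy_sequence F M L \<Longrightarrow> prefix (as @ [b]) L \<Longrightarrow> b \<in> ext F (set as) M"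
  "greedy_sequence F M L \<Longrightarrow> prefix (as @ [b]) L \<Longrightarrow> x \<in> ext F (set as) M \<Longrightarrow> b \<le> x"
  unfolding greedy_sequence_def by blast+

lemma greedy_sequence_prefix:
  "greedy_sequence F M L \<Longrightarrow> prefix K L \<Longrightarrow> greedy_sequence F M K"
  unfolding greedy_sequence_def by (meson prefix_order.trans)

lemma greedy_sequence_snoc:
  assumes "greedy_sequence F M L" and "b \<in> ext F (set L) M" and "\<forall>x\<in>ext F (set L) M. b \<le> x"
  shows "greedy_sequence F M (L @ [b])"
  using assms unfolding greedy_sequence_def by auto

lemma greedy_sequence_Nil [simp]: "greedy_sequence F M []"
  unfolding greedy_sequence_def by simp

lemma greedy_sequence_subset:
  assumes "greedy_sequence F M L"
  shows "set L \<subseteq> M"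
proof
  fix x assume "x \<in> set L"
  then obtain as bs where "L = as @ x # bs" by (meson split_list)
  then have "x \<in> ext F (set as) M" using greedy_sequenceD(1)[OF assms] by simp
  then show "x \<in> M" unfolding ext_def by simp
qed

lemma greedy_sequence_set_in:
  assumes "{} \<in> F" and "greedy_sequence F M L"
  shows "set L \<in> F"
  using assms(2)
proof (induction L rule: rev_induct)
  case (snoc b L)
  have "b \<in> ext F (set L) M" using greedy_sequenceD(1)[OF snoc.prems] by simp
  then show ?case using snoc greedy_sequence_prefix unfolding ext_def by fastforce
qed (simp add: assms(1))

lemma canonical_order_greedy:
  assumes "set_system U F" and "strongly_accessible F" and "M \<in> F" and "M \<noteq> {}"
  shows "greedy_sequence F M (canonical_order U F M) \<and> set (canonical_order U F M) = M"
proof -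
  have "finite U" "F \<subseteq> Pow U" "{} \<in> F" using assms(1) unfolding set_system_def by auto
  with \<open>M \<in> F\<close> have "M \<subseteq> U" and "finite M" by (auto intro: finite_subset)
  have fin_ext: "finite (ext F X M)" for X using \<open>finite M\<close> unfolding ext_def by simp
  \<comment> \<open>The source is the greedy choice from the empty set.\<close>
  have ext_empty: "ext F {} M = M \<inter> singletons U F"
    using \<open>M \<subseteq> U\<close> unfolding ext_def singletons_def by auto
  obtain z where "z \<in> M" "{z} \<in> F"
    using assms(2-4) \<open>{} \<in> F\<close> unfolding strongly_accessible_def by blast
  then have "ext F {} M \<noteq> {}" unfolding ext_def by auto
  then have "greedy_sequence F M [source U F M]"
    using greedy_sequence_snoc[of F M "[]"] Min_in[OF fin_ext] Min_le[OF fin_ext]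
    unfolding source_def ext_empty[symmetric] by simp
  then show ?thesis
    unfolding canonical_order_def
  proof (rule while_rule[where P = "greedy_sequence F M" and r = "measure (\<lambda>L. card (M - set L))"])
    fix L assume L: "greedy_sequence F M L" and ne: "ext F (set L) M \<noteq> {}"
    show "greedy_sequence F M (L @ [Min (ext F (set L) M)])"
      using greedy_sequence_snoc[OF L] Min_in[OF fin_ext ne] Min_le[OF fin_ext] by blast
    have "Min (ext F (set L) M) \<in> M - set L" using Min_in[OF fin_ext ne] unfolding ext_def by blast
    then show "(L @ [Min (ext F (set L) M)], L) \<in> measure (\<lambda>L. card (M - set L))"
      unfolding in_measure using \<open>finite M\<close> by (intro psubset_card_mono) auto
  next
    fix L assume L: "greedy_sequence F M L" and "\<not> ext F (set L) M \<noteq> {}"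
    moreover have "set L \<subseteq> M" "set L \<in> F"
      using L greedy_sequence_subset greedy_sequence_set_in \<open>{} \<in> F\<close> by auto
    ultimately show "greedy_sequence F M L \<and> set L = M"
      using assms(2,3) unfolding strongly_accessible_def ext_def by blast
  qed (use \<open>finite M\<close> in simp)
qed

lemma canonical_order_prefix_in:
  assumes "set_system U F" and "strongly_accessible F" and "S \<in> F" and "S \<noteq> {}"
  shows "set (take j (canonical_order U F S)) \<in> F"
proof -
  have "{} \<in> F" using assms(1) unfolding set_system_def by simp
  moreover have "greedy_sequence F S (take j (canonical_order U F S))"
    using canonical_order_greedy[OF assms] greedy_sequence_prefix take_is_prefix by blast
  ultimately show ?thesis by (rule greedy_sequence_set_in)
qed

text \<open>The completion of \<open>set ps\<close> follows the greedy sequence of \<open>S\<close> until it first picks an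
  element \<open>x\<close> off it; since the sequence element \<open>d\<close> was also available, \<open>x < d\<close>, except possibly
  at the end of \<open>as\<close>.\<close>

lemma complete_greedy_prefix_cases:
  assumes "finite U" and "S \<subseteq> U" and greedy: "greedy_sequence F S (as @ [c])" and "prefix ps as"
  shows "(\<exists>qs. prefix qs as \<and> complete U F (set ps) = set qs) \<or>
    (\<exists>qs d. prefix (qs @ [d]) (as @ [c]) \<and>
      (\<exists>x\<in>complete U F (set ps). x \<in> ext F (set qs) U \<and> x \<le> d \<and> (x = d \<longrightarrow> qs = as)))"
proof -
  define I where "I Y \<longleftrightarrow> (\<exists>qs. prefix qs as \<and> Y = set qs) \<or>
    (\<exists>qs d. prefix (qs @ [d]) (as @ [c]) \<and>
      (\<exists>x\<in>Y. x \<in> ext F (set qs) U \<and> x \<le> d \<and> (x = d \<longrightarrow> qs = as)))" for Y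
  have "I (complete_in F U (set ps))"
  proof (rule conjunct1[OF complete_in_rule[OF \<open>finite U\<close>, where P = I]])
    show "I (set ps)" unfolding I_def using \<open>prefix ps as\<close> by blast
    fix Y assume "I Y" and ne: "ext F Y U \<noteq> {}"
    define m where "m = Min (ext F Y U)"
    have fin: "finite (ext F Y U)" using \<open>finite U\<close> unfolding ext_def by simp
    have m: "m \<in> ext F Y U" using Min_in[OF fin ne] unfolding m_def .
    have "I (insert m Y)"
      using \<open>I Y\<close>[unfolded I_def]
    proof (elim disjE exE conjE)
      fix qs assume qs: "prefix qs as" and Y: "Y = set qs"
      obtain d where d: "prefix (qs @ [d]) (as @ [c])"
      proof -
        from qs obtain zs where "as = qs @ zs" by (rule prefixE)
        then show ?thesis by (cases zs) (auto intro: that)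
      qed
      have "d \<in> ext F Y U" using greedy_sequenceD(1)[OF greedy d] \<open>S \<subseteq> U\<close> Y unfolding ext_def by blast
      then have "m \<le> d" unfolding m_def using fin by simp
      show "I (insert m Y)"
      proof (cases "m = d \<and> qs \<noteq> as")
        case True
        then have "prefix (qs @ [m]) as" using d by simp
        then show ?thesis unfolding I_def Y by (intro disjI1 exI[of _ "qs @ [m]"]) simp
      next
        case False
        then show ?thesis unfolding I_def using d m \<open>m \<le> d\<close> Y by blast
      qed
    qed (auto simp: I_def)
    then show "I (insert (Min (ext F Y U)) Y)" unfolding m_def .
  qed
  then show ?thesis unfolding I_def complete_def .
qed

lemma complete_greedy_prefix_ext_below:
  assumes "finite U" and "S \<subseteq> U"
    and greedy_S: "greedy_sequence F S (as @ c # rest)"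
    and greedy_T: "greedy_sequence F T (as @ b # bs)"
    and ps: "prefix ps (as @ c # rest)" and T: "T = complete U F (set ps)"
  shows "\<exists>x\<in>ext F (set as) T. x \<le> c"
proof (cases "prefix ps as")
  case True
  have "greedy_sequence F S (as @ [c])" using greedy_sequence_prefix[OF greedy_S] by simp
  from complete_greedy_prefix_cases[OF assms(1,2) this True, folded T]
  consider (follows) qs where "prefix qs as" "T = set qs"
    | (leaves) qs d x where "prefix (qs @ [d]) (as @ [c])" "x \<in> T" "x \<in> ext F (set qs) U"
        "x \<le> d" "x = d \<longrightarrow> qs = as"
    by blast
  then show ?thesis
  proof cases
    case follows
    have "b \<in> ext F (set as) T" using greedy_sequenceD(1)[OF greedy_T] by simp
    then show ?thesis using follows set_mono_prefix unfolding ext_def by blast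
  next
    case leaves
    then have x: "x \<in> ext F (set qs) T" unfolding ext_def by simp
    show ?thesis
    proof (cases "qs = as")
      case True
      then show ?thesis using leaves x by auto
    next
      case False
      then have "prefix (qs @ [d]) (as @ b # bs)"
        using leaves(1) prefix_order.trans[of _ as] by fastforce
      then have "d \<le> x" using greedy_sequenceD(2)[OF greedy_T _ x] by simp
      then show ?thesis using leaves False by simp
    qed
  qed
next
  case False
  have "prefix (as @ [c]) ps"
    using prefix_same_cases[OF ps, of "as @ [c]"] False by auto
  then have "c \<in> T" using complete_in_superset[OF \<open>finite U\<close>] set_mono_prefix
    unfolding T complete_def by fastforce
  moreover have "c \<in> ext F (set as) S" using greedy_sequenceD(1)[OF greedy_S] by simp
  ultimately show ?thesis unfolding ext_def by auto
qed

lemma sol_le_complete_canonical_prefix: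
  assumes ss: "set_system U F" and sa: "strongly_accessible F"
    and "maximal_sol F S" and "S \<noteq> {}" and "1 \<le> j"
  shows "sol_le U F (complete U F (set (take j (canonical_order U F S)))) S"
proof -
  define cs where "cs = canonical_order U F S"
  define T where "T = complete U F (set (take j cs))"
  define ct where "ct = canonical_order U F T"
  have "finite U" and "F \<subseteq> Pow U" using ss unfolding set_system_def by auto
  have S: "S \<in> F" "\<not> (\<exists>Y\<in>F. S \<subset> Y)" using \<open>maximal_sol F S\<close> unfolding maximal_sol_def by auto
  with \<open>F \<subseteq> Pow U\<close> have "S \<subseteq> U" by auto
  have cs: "greedy_sequence F S cs" "set cs = S"
    using canonical_order_greedy[OF ss sa S(1) \<open>S \<noteq> {}\<close>] unfolding cs_def by auto
  have "maximal_sol F T"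
    using maximal_sol_complete[OF ss sa canonical_order_prefix_in[OF ss sa S(1) \<open>S \<noteq> {}\<close>]]
    unfolding T_def cs_def .
  then have T: "T \<in> F" "\<not> (\<exists>Y\<in>F. T \<subset> Y)" unfolding maximal_sol_def by auto
  have "set (take j cs) \<subseteq> T"
    using complete_in_superset[OF \<open>finite U\<close>] unfolding T_def complete_def .
  moreover have "take j cs \<noteq> []" using cs(2) \<open>S \<noteq> {}\<close> \<open>1 \<le> j\<close> by auto
  ultimately have "T \<noteq> {}" by auto
  then have ct: "greedy_sequence F T ct" "set ct = T"
    using canonical_order_greedy[OF ss sa T(1)] unfolding ct_def by auto
  show ?thesis
  proof (cases "T = S")
    case False
    have "ct \<parallel> cs"
    proof
      show "\<not> prefix ct cs" using set_mono_prefix[of ct cs] ct(2) cs(2) T(2) S(1) False by blast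
      show "\<not> prefix cs ct" using set_mono_prefix[of cs ct] ct(2) cs(2) S(2) T(1) False by blast
    qed
    then obtain as b bs c rest where "b \<noteq> c" and ct_split: "ct = as @ b # bs"
      and cs_split: "cs = as @ c # rest"
      using parallel_decomp by blast
    obtain x where "x \<in> ext F (set as) T" "x \<le> c"
      using complete_greedy_prefix_ext_below[OF \<open>finite U\<close> \<open>S \<subseteq> U\<close>
          cs(1)[unfolded cs_split] ct(1)[unfolded ct_split] take_is_prefix T_def[unfolded cs_split]]
      by blast
    moreover have "b \<le> x"
      using greedy_sequenceD(2)[OF ct(1) _ \<open>x \<in> ext F (set as) T\<close>] ct_split by simp
    ultimately have "b < c" using \<open>b \<noteq> c\<close> by simp
    then have "sol_less U F T S"
      unfolding sol_less_def Let_def ct_def[symmetric] cs_def[symmetric]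
      using False by (intro conjI exI[of _ "length as"]) (simp_all add: ct_split cs_split)
    then show ?thesis unfolding sol_le_def T_def cs_def ..
  qed (simp add: sol_le_def T_def cs_def)
qed

theorem mainTheorem3:
  fixes U :: "int set" and F :: "int set set" and S :: "int set" and j :: nat
  assumes "set_system U F"
    and "strongly_accessible F"
    and "maximal_sol F S"
    and "S \<noteq> {}"
    and "1 \<le> j" and "j \<le> card S"
  shows "maximal_sol F (complete U F (set (take j (canonical_order U F S))))
       \<and> sol_le U F (complete U F (set (take j (canonical_order U F S)))) S"
proof
  have "S \<in> F" using assms(3) unfolding maximal_sol_def by simp
  show "maximal_sol F (complete U F (set (take j (canonical_order U F S))))"
    using maximal_sol_complete[OF assms(1,2) canonical_order_prefix_in[OF assms(1,2) \<open>S \<in> F\<close> assms(4)]] .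
  show "sol_le U F (complete U F (set (take j (canonical_order U F S)))) S"
    using sol_le_complete_canonical_prefix[OF assms(1-5)] .
qed

end
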